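(* Consider a (non-relational) refinement type system with judgments $\vdash e : T$ over types built from $\mathbb{N}$, function types $T\to U$ and refinements $\{x:T\mid\phi\}$, containing: (i) an application rule (from $\vdash e_1 : T\to U$ and $\vdash e_2:T$ infer $\vdash e_1\,e_2 : U$) and the typing $\vdash 0:\mathbb{N}$; (ii) a subsumption rule (from $\vdash e:T$ and $T\preceq U$ infer $\vdash e:U$); (iii) the subtyping equivalences $\{x:T\mid\phi\}\to\{y:U\mid\psi\}\simeq\{f:T\to U\mid \forall x:T.\ \phi\Rightarrow\psi[f\,x/y]\}$ and $T\simeq\{x:T\mid\top\}$, where $\simeq$ means subtyping in both directions; (iv) the rule of consequence $\{x:T\mid\phi\}\preceq\{x:T\mid\phi'\}$ whenever $\phi\Rightarrow\phi'$ is valid. Let $g$ be the recursive function $\mathtt{letrec}\ g\ x = \mathtt{case}\ x\ \mathtt{of}\ [0\Rightarrow 0 \mid s\,y \Rightarrow g\,x]$. Then: $g\,0$ evaluates to the value $0$; $g\,n$ diverges for every $n\neq 0$ (so $g$ satisfies the partial-correctness specification $\{x:\mathbb{N}\mid x\neq 0\}\to\{y:\mathbb{N}\mid\bot\}$); and if the system derives $\vdash g : \{x:\mathbb{N}\mid x\neq 0\}\to\{y:\mathbb{N}\mid\bot\}$, then it also derives $\vdash g\,0 : \{x:\mathbb{N}\mid\bot\}$, although $g\,0$ reduces to a value and no value satisfies $\bot$. Hence a logical (partial-correctness) interpretation of non-termination is inconsistent with semantic subtyping in the presence of refinements at higher types.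
   Context: In a refinement type $\{x:T\mid\phi\}$, $\phi$ is a logical formula constraining $x$; $\bot$ is falsity and $\top$ truth. $\psi[f\,x/y]$ denotes substitution of $f\,x$ for $y$ in $\psi$. A type system is consistent in the intended sense if whenever $\vdash e:\{x:\mathbb{N}\mid\phi\}$ and $e$ reduces to a value $v$, then $\phi[v/x]$ holds. *)

theory Defs
  imports Main
begin

type_synonym var = string

datatype exp =
    Var var
  | Zero
  | Succ exp
  | App exp exp
  | Lam var exp
  | Rec var var exp          (* Rec f x e  =  letrec f x = e  (a recursive function value) *)
  | Case exp exp var exp     (* Case e e0 y es  =  case e of [0 => e0 | s y => es] *)

fun is_val :: "exp \<Rightarrow> bool" where
  "is_val Zero = True"
| "is_val (Succ e) = is_val e"
| "is_val (Lam x e) = True"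
| "is_val (Rec f x e) = True"
| "is_val _ = False"

text \<open>Single-variable substitution (non capture-avoiding; used on closed values in evaluation).\<close>
primrec subst :: "var \<Rightarrow> exp \<Rightarrow> exp \<Rightarrow> exp" where
  "subst x v (Var y) = (if x = y then v else Var y)"
| "subst x v Zero = Zero"
| "subst x v (Succ e) = Succ (subst x v e)"
| "subst x v (App e1 e2) = App (subst x v e1) (subst x v e2)"
| "subst x v (Lam y e) = (if x = y then Lam y e else Lam y (subst x v e))"
| "subst x v (Rec f y e) = (if x = f \<or> x = y then Rec f y e else Rec f y (subst x v e))"
| "subst x v (Case e e0 y es) =
     Case (subst x v e) (subst x v e0) y (if x = y then es else subst x v es)"

primrec psubst :: "(var \<Rightarrow> exp) \<Rightarrow> exp \<Rightarrow> exp" where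
  "psubst \<rho> (Var y) = \<rho> y"
| "psubst \<rho> Zero = Zero"
| "psubst \<rho> (Succ e) = Succ (psubst \<rho> e)"
| "psubst \<rho> (App e1 e2) = App (psubst \<rho> e1) (psubst \<rho> e2)"
| "psubst \<rho> (Lam y e) = Lam y (psubst (\<rho>(y := Var y)) e)"
| "psubst \<rho> (Rec f y e) = Rec f y (psubst (\<rho>(f := Var f, y := Var y)) e)"
| "psubst \<rho> (Case e e0 y es) = Case (psubst \<rho> e) (psubst \<rho> e0) y (psubst (\<rho>(y := Var y)) es)"

primrec fv_exp :: "exp \<Rightarrow> var set" where
  "fv_exp (Var y) = {y}"
| "fv_exp Zero = {}"
| "fv_exp (Succ e) = fv_exp e"
| "fv_exp (App e1 e2) = fv_exp e1 \<union> fv_exp e2"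
| "fv_exp (Lam y e) = fv_exp e - {y}"
| "fv_exp (Rec f y e) = fv_exp e - {f, y}"
| "fv_exp (Case e e0 y es) = fv_exp e \<union> fv_exp e0 \<union> (fv_exp es - {y})"

inductive step :: "exp \<Rightarrow> exp \<Rightarrow> bool" where
  beta_lam: "is_val v \<Longrightarrow> step (App (Lam x e) v) (subst x v e)"
| beta_rec: "is_val v \<Longrightarrow> step (App (Rec f x e) v) (subst f (Rec f x e) (subst x v e))"
| case_zero: "step (Case Zero e0 y es) e0"
| case_succ: "is_val v \<Longrightarrow> step (Case (Succ v) e0 y es) (subst y v es)"
| app_l: "step e1 e1' \<Longrightarrow> step (App e1 e2) (App e1' e2)"
| app_r: "is_val v \<Longrightarrow> step e2 e2' \<Longrightarrow> step (App v e2) (App v e2')"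
| succ_c: "step e e' \<Longrightarrow> step (Succ e) (Succ e')"
| case_c: "step e e' \<Longrightarrow> step (Case e e0 y es) (Case e' e0 y es)"

abbreviation steps :: "exp \<Rightarrow> exp \<Rightarrow> bool" where
  "steps \<equiv> step\<^sup>*\<^sup>*"

definition evals :: "exp \<Rightarrow> exp \<Rightarrow> bool" where
  "evals e v \<longleftrightarrow> steps e v \<and> is_val v"

definition diverges :: "exp \<Rightarrow> bool" where
  "diverges e \<longleftrightarrow> (\<forall>e'. steps e e' \<longrightarrow> (\<exists>e''. step e' e''))"

definition num :: "nat \<Rightarrow> exp" where
  "num n = (Succ ^^ n) Zero"

datatype ty =
    TNat
  | TArr ty ty
  | TRef var ty form          (* TRef x T phi  =  {x:T | phi} *)
and form =
    FTop
  | FBot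
  | FNot form
  | FImp form form
  | FAll var ty form
  | FEq exp exp

primrec fv_ty :: "ty \<Rightarrow> var set" and fv_form :: "form \<Rightarrow> var set" where
  "fv_ty TNat = {}"
| "fv_ty (TArr T U) = fv_ty T \<union> fv_ty U"
| "fv_ty (TRef x T \<phi>) = fv_ty T \<union> (fv_form \<phi> - {x})"
| "fv_form FTop = {}"
| "fv_form FBot = {}"
| "fv_form (FNot \<phi>) = fv_form \<phi>"
| "fv_form (FImp \<phi> \<psi>) = fv_form \<phi> \<union> fv_form \<psi>"
| "fv_form (FAll x T \<phi>) = fv_ty T \<union> (fv_form \<phi> - {x})"
| "fv_form (FEq e1 e2) = fv_exp e1 \<union> fv_exp e2"

primrec tsubst :: "var \<Rightarrow> exp \<Rightarrow> ty \<Rightarrow> ty" and fsubst :: "var \<Rightarrow> exp \<Rightarrow> form \<Rightarrow> form" where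
  "tsubst y e TNat = TNat"
| "tsubst y e (TArr T U) = TArr (tsubst y e T) (tsubst y e U)"
| "tsubst y e (TRef x T \<phi>) = TRef x (tsubst y e T) (if x = y then \<phi> else fsubst y e \<phi>)"
| "fsubst y e FTop = FTop"
| "fsubst y e FBot = FBot"
| "fsubst y e (FNot \<phi>) = FNot (fsubst y e \<phi>)"
| "fsubst y e (FImp \<phi> \<psi>) = FImp (fsubst y e \<phi>) (fsubst y e \<psi>)"
| "fsubst y e (FAll x T \<phi>) = FAll x (tsubst y e T) (if x = y then \<phi> else fsubst y e \<phi>)"
| "fsubst y e (FEq e1 e2) = FEq (subst y e e1) (subst y e e2)"

text \<open>Semantics: types denote sets of values (partial-correctness reading of arrows);
  an equation holds when both sides evaluate to the same value.\<close>
primrec tsem :: "(var \<Rightarrow> exp) \<Rightarrow> ty \<Rightarrow> exp \<Rightarrow> bool"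
  and fsem :: "(var \<Rightarrow> exp) \<Rightarrow> form \<Rightarrow> bool" where
  "tsem \<rho> TNat v = (\<exists>n. v = num n)"
| "tsem \<rho> (TArr T U) v = (is_val v \<and> (\<forall>a. tsem \<rho> T a \<longrightarrow>
       (diverges (App v a) \<or> (\<exists>w. evals (App v a) w \<and> tsem \<rho> U w))))"
| "tsem \<rho> (TRef x T \<phi>) v = (tsem \<rho> T v \<and> fsem (\<rho>(x := v)) \<phi>)"
| "fsem \<rho> FTop = True"
| "fsem \<rho> FBot = False"
| "fsem \<rho> (FNot \<phi>) = (\<not> fsem \<rho> \<phi>)"
| "fsem \<rho> (FImp \<phi> \<psi>) = (fsem \<rho> \<phi> \<longrightarrow> fsem \<rho> \<psi>)"
| "fsem \<rho> (FAll x T \<phi>) = (\<forall>v. tsem \<rho> T v \<longrightarrow> fsem (\<rho>(x := v)) \<phi>)"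
| "fsem \<rho> (FEq e1 e2) = (\<exists>v. evals (psubst \<rho> e1) v \<and> evals (psubst \<rho> e2) v)"

definition valid :: "form \<Rightarrow> bool" where
  "valid \<phi> \<longleftrightarrow> (\<forall>\<rho>. fsem \<rho> \<phi>)"

text \<open>A typing judgement \<open>HT e T\<close> (\<open>\<turnstile> e : T\<close>) together with a subtyping relation
  \<open>Sub T U\<close> (\<open>T \<preceq> U\<close>) containing the rules (i)--(iv).\<close>
definition contains_rules :: "(exp \<Rightarrow> ty \<Rightarrow> bool) \<Rightarrow> (ty \<Rightarrow> ty \<Rightarrow> bool) \<Rightarrow> bool" where
  "contains_rules HT Sub \<longleftrightarrow>
     (\<forall>e1 e2 T U. HT e1 (TArr T U) \<longrightarrow> HT e2 T \<longrightarrow> HT (App e1 e2) U)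
   \<and> HT Zero TNat
   \<and> (\<forall>e T U. HT e T \<longrightarrow> Sub T U \<longrightarrow> HT e U)
   \<and> (\<forall>x y f T U \<phi> \<psi>. f \<noteq> x \<and> f \<noteq> y \<and> f \<notin> fv_form \<phi> \<and> f \<notin> fv_form \<psi> \<longrightarrow>
        (let A = TArr (TRef x T \<phi>) (TRef y U \<psi>);
             B = TRef f (TArr T U) (FAll x T (FImp \<phi> (fsubst y (App (Var f) (Var x)) \<psi>)))
         in Sub A B \<and> Sub B A))
   \<and> (\<forall>x T. Sub T (TRef x T FTop) \<and> Sub (TRef x T FTop) T)
   \<and> (\<forall>x T \<phi> \<phi>'. valid (FImp \<phi> \<phi>') \<longrightarrow> Sub (TRef x T \<phi>) (TRef x T \<phi>'))"

definition consistent :: "(exp \<Rightarrow> ty \<Rightarrow> bool) \<Rightarrow> bool" where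
  "consistent HT \<longleftrightarrow>
     (\<forall>e x \<phi> v. HT e (TRef x TNat \<phi>) \<longrightarrow> evals e v \<longrightarrow> (\<forall>\<rho>. fsem (\<rho>(x := v)) \<phi>))"

definition g :: exp where
  "g = Rec ''g'' ''x'' (Case (Var ''x'') Zero ''y'' (App (Var ''g'') (Var ''x'')))"

definition spec :: ty where
  "spec = TArr (TRef ''x'' TNat (FNot (FEq (Var ''x'') Zero))) (TRef ''y'' TNat FBot)"

end

theory Submission
  imports Defs
begin

text \<open>
  The theorem bundles four facts about \<open>g = letrec g x = case x of [0 \<Rightarrow> 0 | s y \<Rightarrow> g x]\<close>.
  (1) Operationally, \<open>g 0\<close> reduces to \<open>0\<close> in two steps, while \<open>g (s m)\<close> and the case
  expression it unfolds to reduce deterministically into each other; a general criterion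
  (a step-closed set of reducible terms contains only diverging terms) turns this
  two-cycle into divergence.  (2) Hence \<open>g\<close> satisfies \<open>{x:N | x \<noteq> 0} \<rightarrow> {y:N | \<bottom>}\<close> under
  the partial-correctness semantics: on every admissible argument it diverges.
  (3) From \<open>\<turnstile> g : spec\<close> the rules derive \<open>\<turnstile> g 0 : {x:N | \<bottom>}\<close>: the arrow equivalence
  turns \<open>spec\<close> into a refinement \<open>{f | \<forall>x:N. x \<noteq> 0 \<Rightarrow> \<bottom>}\<close>, whose formula is false (there
  is a nonzero numeral), so consequence weakens it to \<open>{f | \<forall>x:N. \<top> \<Rightarrow> \<bottom>}\<close>, which the
  arrow equivalence read backwards turns into \<open>{x:N | \<top>} \<rightarrow> {x:N | \<bottom>}\<close>; applying this to
  \<open>0 : {x:N | \<top>}\<close> gives the claim.  (4) Since \<open>g 0\<close> evaluates, consistency fails.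
\<close>

lemma val_nostep: "is_val v \<Longrightarrow> \<not> step v e"
proof (induction v arbitrary: e)
  case (Succ v)
  then show ?case by (auto elim: step.cases)
qed (auto elim: step.cases)

lemma val_steps: "steps v w \<Longrightarrow> is_val v \<Longrightarrow> w = v"
  by (induction rule: converse_rtranclp_induct) (auto dest: val_nostep)

lemma evals_val: "evals v w \<Longrightarrow> is_val v \<Longrightarrow> w = v"
  unfolding evals_def using val_steps by auto

lemma num_val: "is_val (num n)"
  by (induction n) (auto simp: num_def)

lemma subst_num [simp]: "subst x e (num m) = num m"
  by (induction m) (auto simp: num_def)

lemma diverges_if_step_closed:
  assumes "S e"
    and reducible: "\<And>a. S a \<Longrightarrow> \<exists>b. step a b"
    and closed: "\<And>a b. S a \<Longrightarrow> step a b \<Longrightarrow> S b"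
  shows "diverges e"
proof -
  have "S e'" if "steps e e'" for e'
    using that by (induction rule: rtranclp_induct) (auto intro: assms(1) closed)
  then show ?thesis unfolding diverges_def using reducible by blast
qed

lemma g_zero_evals: "evals (App g Zero) Zero"
proof -
  have "step (App g Zero) (Case Zero Zero ''y'' (App g Zero))"
    unfolding g_def
    using beta_rec[of Zero "''g''" "''x''" "Case (Var ''x'') Zero ''y'' (App (Var ''g'') (Var ''x''))"]
    by simp
  moreover have "step (Case Zero Zero ''y'' (App g Zero)) Zero" by (rule case_zero)
  ultimately show ?thesis unfolding evals_def by auto
qed

text \<open>On a successor numeral, \<open>g\<close> unfolds to a case expression that reduces back to the
  original call, and neither term has any other reduct.\<close>
lemma g_succ_diverges: "diverges (App g (Succ (num m)))"
proof -
  define A where "A = App g (Succ (num m))"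
  define C where "C = Case (Succ (num m)) Zero ''y'' A"
  have succ_val: "is_val (Succ (num m))" using num_val by simp
  have succ_nf: "\<not> step (Succ (num m)) e" for e using val_nostep[OF succ_val] .
  have rec_nf: "\<not> step (Rec f x b) e" for f x b e using val_nostep[of "Rec f x b"] by simp
  have A_C: "step A C"
    unfolding A_def C_def g_def
    using beta_rec[OF succ_val, of "''g''" "''x''" "Case (Var ''x'') Zero ''y'' (App (Var ''g'') (Var ''x''))"]
    by simp
  have C_A: "step C A"
    unfolding C_def using case_succ[OF num_val[of m], of Zero "''y''" A]
    by (simp add: A_def g_def)
  have from_A: "step A e \<Longrightarrow> e = C" for e
    unfolding A_def C_def g_def
    by (erule step.cases) (auto simp: succ_nf rec_nf)
  have from_C: "step C e \<Longrightarrow> e = A" for e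
    unfolding C_def
    by (erule step.cases) (auto simp: A_def g_def succ_nf)
  show ?thesis
    using diverges_if_step_closed[of "\<lambda>e. e = A \<or> e = C"] A_C C_A from_A from_C
    unfolding A_def by blast
qed

lemma g_diverges: "n \<noteq> 0 \<Longrightarrow> diverges (App g (num n))"
  using g_succ_diverges by (cases n) (auto simp: num_def)

text \<open>An argument satisfying \<open>x \<noteq> 0\<close> is a nonzero numeral, on which \<open>g\<close> diverges;
  under the partial-correctness reading this meets any postcondition, even \<open>\<bottom>\<close>.\<close>
lemma g_meets_spec: "tsem \<rho> spec g"
  unfolding spec_def
proof (simp, intro conjI allI impI)
  show "is_val g" by (simp add: g_def)
next
  fix a
  assume a: "(\<exists>n. a = num n) \<and> (\<forall>v. evals a v \<longrightarrow> \<not> evals Zero v)"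
  then obtain n where n: "a = num n" by blast
  have "n \<noteq> 0"
  proof
    assume "n = 0"
    then have "a = Zero" using n by (simp add: num_def)
    then show False using a by (auto simp: evals_def)
  qed
  then show "diverges (App g a)" using g_diverges n by blast
qed

text \<open>The refinement obtained from \<open>spec\<close> is unsatisfiable, since the numeral \<open>1\<close> is
  nonzero; so it implies the refinement of the unrestricted arrow to \<open>{x:N | \<bottom>}\<close>.\<close>
lemma spec_refinement_weakening:
  "valid (FImp (FAll ''x'' TNat (FImp (FNot (FEq (Var ''x'') Zero)) FBot))
               (FAll ''x'' TNat (FImp FTop FBot)))"
  unfolding valid_def
proof
  fix \<rho> :: "var \<Rightarrow> exp"
  have "\<not> (evals (num 1) w \<and> evals Zero w)" for w
    using evals_val[OF _ num_val, of 1 w] evals_val[of Zero w] by (auto simp: num_def)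
  then show "fsem \<rho> (FImp (FAll ''x'' TNat (FImp (FNot (FEq (Var ''x'') Zero)) FBot))
                          (FAll ''x'' TNat (FImp FTop FBot)))"
    by auto
qed

lemma spec_application_bottom:
  assumes rules: "contains_rules HT Sub" and typed: "HT e spec"
  shows "HT (App e Zero) (TRef ''x'' TNat FBot)"
proof -
  have app: "\<And>e1 e2 T U. HT e1 (TArr T U) \<Longrightarrow> HT e2 T \<Longrightarrow> HT (App e1 e2) U"
    and zero: "HT Zero TNat"
    and sub: "\<And>e T U. HT e T \<Longrightarrow> Sub T U \<Longrightarrow> HT e U"
    and arr: "\<And>x y f T U \<phi> \<psi>. f \<noteq> x \<Longrightarrow> f \<noteq> y \<Longrightarrow> f \<notin> fv_form \<phi> \<Longrightarrow> f \<notin> fv_form \<psi> \<Longrightarrow>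
        Sub (TArr (TRef x T \<phi>) (TRef y U \<psi>))
            (TRef f (TArr T U) (FAll x T (FImp \<phi> (fsubst y (App (Var f) (Var x)) \<psi>))))
      \<and> Sub (TRef f (TArr T U) (FAll x T (FImp \<phi> (fsubst y (App (Var f) (Var x)) \<psi>))))
            (TArr (TRef x T \<phi>) (TRef y U \<psi>))"
    and top: "\<And>x T. Sub T (TRef x T FTop)"
    and cons: "\<And>x T \<phi> \<phi>'. valid (FImp \<phi> \<phi>') \<Longrightarrow> Sub (TRef x T \<phi>) (TRef x T \<phi>')"
    using rules unfolding contains_rules_def Let_def by blast+
  let ?nonzero = "FNot (FEq (Var ''x'') Zero)"
  have "Sub spec (TRef ''f'' (TArr TNat TNat) (FAll ''x'' TNat (FImp ?nonzero FBot)))"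
    using arr[of "''f''" "''x''" "''y''" ?nonzero FBot TNat TNat] unfolding spec_def by simp
  moreover have "Sub (TRef ''f'' (TArr TNat TNat) (FAll ''x'' TNat (FImp ?nonzero FBot)))
                     (TRef ''f'' (TArr TNat TNat) (FAll ''x'' TNat (FImp FTop FBot)))"
    using cons[OF spec_refinement_weakening] .
  moreover have "Sub (TRef ''f'' (TArr TNat TNat) (FAll ''x'' TNat (FImp FTop FBot)))
                     (TArr (TRef ''x'' TNat FTop) (TRef ''x'' TNat FBot))"
    using arr[of "''f''" "''x''" "''x''" FTop FBot TNat TNat] by simp
  ultimately have "HT e (TArr (TRef ''x'' TNat FTop) (TRef ''x'' TNat FBot))"
    using typed sub by blast
  moreover have "HT Zero (TRef ''x'' TNat FTop)" using sub[OF zero top] .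
  ultimately show ?thesis by (rule app)
qed

lemma bottom_typed_value_inconsistent:
  assumes "HT e (TRef x TNat FBot)" and "evals e v"
  shows "\<not> consistent HT"
  using assms unfolding consistent_def by fastforce

theorem mainTheorem2:
  fixes HT :: "exp \<Rightarrow> ty \<Rightarrow> bool" and Sub :: "ty \<Rightarrow> ty \<Rightarrow> bool"
  assumes "contains_rules HT Sub"
  shows "evals (App g Zero) Zero
    \<and> (\<forall>n. n \<noteq> 0 \<longrightarrow> diverges (App g (num n)))
    \<and> (\<forall>\<rho>. tsem \<rho> spec g)
    \<and> (HT g spec \<longrightarrow>
         HT (App g Zero) (TRef ''x'' TNat FBot)
       \<and> (\<forall>\<rho> v. \<not> tsem \<rho> (TRef ''x'' TNat FBot) v)
       \<and> \<not> consistent HT)"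
proof -
  have "HT (App g Zero) (TRef ''x'' TNat FBot) \<and> \<not> consistent HT" if "HT g spec"
    using spec_application_bottom[OF assms that]
      bottom_typed_value_inconsistent g_zero_evals by blast
  then show ?thesis using g_zero_evals g_diverges g_meets_spec by simp
qed

end
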